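(* Let $q>0$, $q\neq1$. For every integer $N\ge0$, $$H_N(x;q)=[2]_q^N\,e^{-\frac{1}{[2]_q^2}D_x^2}\,x^N,$$ where $e^{aD_x^2}:=\sum_{n\ge0}\frac{a^n}{n!}D_x^{2n}$ (a finite sum on polynomials).
   Context: For $n\ge 0$ let $[n]_q=\frac{q^n-1}{q-1}$, $[0]_q!=1$, $[n]_q!=[1]_q\cdots[n]_q$, and $e_q(z)=\sum_{n\ge0}z^n/[n]_q!$. The $q$-derivative acts on polynomials by $D_x x^n=[n]_qx^{n-1}$ (equivalently $D_xf(x)=\frac{f(qx)-f(x)}{(q-1)x}$). The $q$-Hermite polynomials $H_N(x;q)$ are defined by the identity of formal power series in $t$: $e^{-t^2}e_q([2]_q t x)=\sum_{N\ge0}H_N(x;q)\,t^N/[N]_q!$. *)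

theory Defs
  imports "HOL-Computational_Algebra.Polynomial" "HOL-Computational_Algebra.Formal_Power_Series"
begin

definition q_int :: "real \<Rightarrow> nat \<Rightarrow> real" where
  "q_int q n = (q ^ n - 1) / (q - 1)"

definition q_fact :: "real \<Rightarrow> nat \<Rightarrow> real" where
  "q_fact q n = (\<Prod>k = 1..n. q_int q k)"

definition q_exp_fps :: "real \<Rightarrow> real \<Rightarrow> real fps" where
  "q_exp_fps q c = Abs_fps (\<lambda>n. c ^ n / q_fact q n)"

definition exp_neg_sq_fps :: "real fps" where
  "exp_neg_sq_fps = fps_compose (fps_exp 1) (- (fps_X ^ 2))"

text \<open>q-Hermite polynomials defined by the generating function
  exp(-t^2) e_q([2]_q t x) = sum_N H_N(x;q) t^N / [N]_q!\<close>
definition q_hermite :: "nat \<Rightarrow> real \<Rightarrow> real \<Rightarrow> real" where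
  "q_hermite N x q = q_fact q N * fps_nth (exp_neg_sq_fps * q_exp_fps q (q_int q 2 * x)) N"

definition q_deriv :: "real \<Rightarrow> real poly \<Rightarrow> real poly" where
  "q_deriv q p = (\<Sum>n\<le>degree p. smult (coeff p n * q_int q n) (monom 1 (n - 1)))"

end

theory Submission
  imports Defs
begin

text \<open>Both sides are the classical explicit sum
  \<open>H_N = [N]_q! \<Sum>\<^sub>n (-1)^n/n! ([2]_q x)^(N-2n)/[N-2n]_q!\<close>:
  on the left it is the coefficient of \<open>t^N\<close> in the product of the two series,
  on the right \<open>D\<^sub>x^(2n) x^N = [N]_q!/[N-2n]_q! x^(N-2n)\<close>, which vanishes for
  \<open>2n > N\<close> because \<open>[0]_q = 0\<close>, and the powers of \<open>[2]_q\<close> cancel.\<close>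

lemma q_int_0 [simp]: "q_int q 0 = 0"
  by (simp add: q_int_def)

lemma q_int_pos:
  assumes "q > 0" "q \<noteq> 1" "k \<ge> 1"
  shows "q_int q k > 0"
proof -
  have "q_int q k = (\<Sum>i<k. q ^ i)"
    using assms by (simp add: sum_gp_strict q_int_def) (simp add: field_simps)
  also have "\<dots> > 0"
    using assms by (intro sum_pos) (auto simp: lessThan_empty_iff)
  finally show ?thesis .
qed

lemma q_fact_pos:
  assumes "q > 0" "q \<noteq> 1"
  shows "q_fact q k > 0"
  unfolding q_fact_def using q_int_pos[OF assms] by (intro prod_pos) auto

lemma q_fact_Suc: "q_fact q (Suc m) = q_fact q m * q_int q (Suc m)"
  by (simp add: q_fact_def)

lemma q_fact_add_prod: "q_fact q (k + j) = q_fact q k * (\<Prod>i<j. q_int q (k + j - i))"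
proof (induction j)
  case 0
  then show ?case by simp
next
  case (Suc j)
  have "(\<Prod>i<Suc j. q_int q (k + Suc j - i)) = q_int q (k + Suc j) * (\<Prod>i<j. q_int q (k + j - i))"
    by (subst prod.lessThan_Suc_shift) simp
  then show ?case
    using Suc by (simp add: q_fact_Suc)
qed

lemma q_falling_prod_eq_q_fact_div:
  assumes "q > 0" "q \<noteq> 1" "j \<le> N"
  shows "(\<Prod>i<j. q_int q (N - i)) = q_fact q N / q_fact q (N - j)"
  using q_fact_add_prod[of q "N - j" j] q_fact_pos[OF assms(1,2), of "N - j"] assms(3)
  by (simp add: field_simps)

lemma q_falling_prod_eq_0:
  assumes "N < j"
  shows "(\<Prod>i<j. q_int q (N - i)) = 0"
  using assms by (intro prod_zero bexI[of _ N]) auto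

lemma q_deriv_monom: "q_deriv q (monom c m) = monom (c * q_int q m) (m - 1)"
proof (cases "c = 0")
  case True
  then show ?thesis by (simp add: q_deriv_def)
next
  case False
  have "q_deriv q (monom c m) = (\<Sum>n\<le>m. smult (coeff (monom c m) n * q_int q n) (monom 1 (n - 1)))"
    using False by (simp add: q_deriv_def degree_monom_eq)
  also have "\<dots> = smult (c * q_int q m) (monom 1 (m - 1))"
    by (subst sum.remove[of _ m]) (auto simp: coeff_monom intro!: sum.neutral)
  finally show ?thesis
    by (simp add: smult_monom)
qed

lemma q_deriv_funpow_monom:
  "(q_deriv q ^^ j) (monom c m) = monom (c * (\<Prod>i<j. q_int q (m - i))) (m - j)"
  by (induction j) (simp_all add: q_deriv_monom mult_ac)

lemma exp_neg_sq_fps_nth: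
  "fps_nth exp_neg_sq_fps i = (if even i then (-1) ^ (i div 2) / fact (i div 2) else 0)"
proof -
  have power_nth: "fps_nth ((- (fps_X ^ 2)) ^ j :: real fps) i = (if i = 2 * j then (-1) ^ j else 0)"
    for j
  proof -
    have "(- (fps_X ^ 2)) ^ j = ((-1) ^ j * (fps_X ^ 2) ^ j :: real fps)"
      by (rule power_minus)
    also have "\<dots> = fps_const ((-1) ^ j) * fps_X ^ (2 * j)"
      by (simp add: power_mult fps_const_power[symmetric] fps_const_neg[symmetric])
    finally show ?thesis
      by (simp add: fps_X_power_iff)
  qed
  have "(\<Sum>j=0..i. if i = 2 * j then g j else 0) = (if even i then g (i div 2) else 0)"
    for g :: "nat \<Rightarrow> real"
    by (cases "even i") (auto simp: sum.delta' elim!: evenE intro!: sum.neutral)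
  then show ?thesis
    unfolding exp_neg_sq_fps_def fps_compose_nth power_nth
    by (simp add: if_distrib cong: if_cong)
qed

lemma sum_even_indices:
  fixes h :: "nat \<Rightarrow> 'a :: comm_monoid_add"
  shows "(\<Sum>i=0..N. if even i then h (i div 2) else 0) = (\<Sum>n\<le>N div 2. h n)"
proof -
  have "(\<Sum>i=0..N. if even i then h (i div 2) else 0) = (\<Sum>i\<in>{i\<in>{0..N}. even i}. h (i div 2))"
    by (rule sum.inter_filter[symmetric]) simp
  also have "{i\<in>{0..N}. even i} = (\<lambda>n. 2 * n) ` {..N div 2}"
    by (auto elim!: evenE)
  also have "(\<Sum>i\<in>(\<lambda>n. 2 * n) ` {..N div 2}. h (i div 2)) = (\<Sum>n\<le>N div 2. h n)"
    by (subst sum.reindex) (auto simp: inj_on_def)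
  finally show ?thesis .
qed

lemma q_hermite_eq_sum:
  "q_hermite N x q =
    (\<Sum>n\<le>N div 2. q_fact q N * (-1) ^ n / fact n * (q_int q 2 * x) ^ (N - 2 * n) / q_fact q (N - 2 * n))"
  unfolding q_hermite_def fps_mult_nth exp_neg_sq_fps_nth q_exp_fps_def
  by (simp add: sum_distrib_left flip: sum_even_indices) (auto intro!: sum.cong elim!: evenE)

lemma scaled_falling_term_eq:
  fixes c x :: real
  assumes "c \<noteq> 0" "2 * n \<le> N"
  shows "c ^ N * ((- 1 / c ^ 2) ^ n / fact n * (F / G * x ^ (N - 2 * n)))
       = F * (-1) ^ n / fact n * (c * x) ^ (N - 2 * n) / G"
proof -
  have "c ^ N = c ^ (N - 2 * n) * (c ^ 2) ^ n"
    using assms(2) by (simp add: power_mult[symmetric] power_add[symmetric])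
  then have "c ^ N * (- 1 / c ^ 2) ^ n = c ^ (N - 2 * n) * ((c ^ 2) * (- 1 / c ^ 2)) ^ n"
    by (simp only: power_mult_distrib mult.assoc)
  also have "\<dots> = c ^ (N - 2 * n) * (-1) ^ n"
    using assms(1) by simp
  finally show ?thesis
    by (simp add: power_mult_distrib field_simps)
qed

theorem proposition2:
  fixes q x :: real and N :: nat
  assumes "q > 0" and "q \<noteq> 1"
  shows "q_hermite N x q =
    q_int q 2 ^ N * poly (\<Sum>n\<le>N. smult ((- 1 / q_int q 2 ^ 2) ^ n / fact n)
                                    ((q_deriv q ^^ (2 * n)) (monom 1 N))) x"
proof -
  define c where "c = q_int q 2"
  define summand where "summand n = c ^ N * ((- 1 / c ^ 2) ^ n / fact n *
    ((\<Prod>i<2 * n. q_int q (N - i)) * x ^ (N - 2 * n)))" for n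
  have "c \<noteq> 0"
    using q_int_pos[OF assms, of 2] by (simp add: c_def)
  have "c ^ N * poly (\<Sum>n\<le>N. smult ((- 1 / c ^ 2) ^ n / fact n)
                              ((q_deriv q ^^ (2 * n)) (monom 1 N))) x = (\<Sum>n\<le>N. summand n)"
    by (simp add: summand_def poly_sum q_deriv_funpow_monom poly_monom sum_distrib_left)
  also have "\<dots> = (\<Sum>n\<le>N div 2. summand n)"
    by (rule sum.mono_neutral_right) (auto simp: summand_def q_falling_prod_eq_0 simp del: prod_zero_iff)
  also have "\<dots> = q_hermite N x q"
    unfolding q_hermite_eq_sum c_def[symmetric]
  proof (intro sum.cong refl)
    fix n
    assume "n \<in> {..N div 2}"
    then have "2 * n \<le> N"
      by simp
    then show "summand n = q_fact q N * (-1) ^ n / fact n * (c * x) ^ (N - 2 * n) / q_fact q (N - 2 * n)"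
      unfolding summand_def q_falling_prod_eq_q_fact_div[OF assms \<open>2 * n \<le> N\<close>]
      by (rule scaled_falling_term_eq[OF \<open>c \<noteq> 0\<close>])
  qed
  finally show ?thesis
    by (simp add: c_def)
qed

end
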